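(* In the setting described in the context (the random experiment for SA2), for any construction map $\zeta$ and any slot allocation $\tau$ of $\Lambda(\zeta)$ that occur with non-zero probability, the associated service placement $X^\tau$ is feasible, i.e. $\sum_{i\in S}s_i\mathbf 1[j\in X^\tau_i]\le c_j$ for all $j\in V$.
   Context: An SPSC instance: finite sets $S$ (services), $V$ (nodes), $U$ (users); sizes $s_i>0$; capacities $c_j>0$; for each user $k$ a service $i_k\in S$, a set $T_k\subseteq V$, a reward $w_k>0$. Let $\{x_{ij}\},\{y_k\}$ be an optimal solution of the LP with nonnegative variables: maximize $\sum_ky_kw_k$ s.t. $y_k\le\sum_{j\in T_k}x_{i_kj}$, $y_k\le1$; $\sum_ix_{ij}s_i\le c_j$; $x_{ij}=0$ if $s_i>c_j$; $0\le x_{ij}\le1$. Let $\beta:=1/4,\gamma:=1/2,\delta:=1/4$, $\mathbb N=\{1,2,\dots\}$. For $j\in V$: $P_j^\oplus:=\{i:c_j/2<s_i\le c_j\}$, $P_j^\ominus:=\{i:c_j/4<s_i\le c_j/2\}$, $P_j^q:=\{i:\gamma^qc_j\beta<s_i\le\gamma^{q-1}c_j\beta\}$ ($q\in\mathbb N$); $d_j^q:=\sum_{i\in P_j^q}x_{ij}$ for $q\in\mathbb N\cup\{\oplus,\ominus\}$; $v_j:=\delta c_j/\sum_{i:s_i\le c_j\beta}s_ix_{ij}$; $n_j^q:=\lceil v_jd_j^q\rceil$; $h_j:=d_j^\ominus$ if $d_j^\ominus<2$, else $d_j^\ominus/2$. A construction map $\zeta:V\to\{1,2,3\}$ has slot set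 $\Lambda(\zeta)$ (slot $\sigma$ has node $\nu(\sigma)$, class $\kappa(\sigma)$): for each $j$, one slot of class $\oplus$ if $\zeta(j)=1$; two slots of class $\ominus$ if $\zeta(j)=2$; for each $q\in\mathbb N$, $n_j^q$ slots of class $q$ if $\zeta(j)=3$; no other slots on $j$. A slot allocation of $\Lambda$ is $\tau:\Lambda\to S$ with $\tau(\sigma)\in P^{\kappa(\sigma)}_{\nu(\sigma)}$; $X^\tau_i:=\{j:\exists\sigma,\nu(\sigma)=j,\tau(\sigma)=i\}$. Random experiment: $\zeta(j)$ independent over $j$, equal to $1,2,3$ with probabilities $\delta d_j^\oplus,\ \delta h_j,\ 1-\delta d_j^\oplus-\delta h_j$; given $\zeta$, each slot $\sigma\in\Lambda(\zeta)$ independently gets $\tau(\sigma)=i$ with probability $x_{i\nu(\sigma)}/d^{\kappa(\sigma)}_{\nu(\sigma)}$, $i\in P^{\kappa(\sigma)}_{\nu(\sigma)}$. *)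

theory Defs
  imports Complex_Main
begin

text \<open>Services have type 's, nodes 'v, users 'u.
  s: sizes, c: capacities, svc k = i_k, T k = T_k, w k = w_k.\<close>

definition spsc_instance ::
  "'s set \<Rightarrow> 'v set \<Rightarrow> 'u set \<Rightarrow> ('s \<Rightarrow> real) \<Rightarrow> ('v \<Rightarrow> real)
   \<Rightarrow> ('u \<Rightarrow> 's) \<Rightarrow> ('u \<Rightarrow> 'v set) \<Rightarrow> ('u \<Rightarrow> real) \<Rightarrow> bool" where
  "spsc_instance S V U s c svc T w \<longleftrightarrow>
     finite S \<and> finite V \<and> finite U \<and>
     (\<forall>i\<in>S. s i > 0) \<and> (\<forall>j\<in>V. c j > 0) \<and>
     (\<forall>k\<in>U. svc k \<in> S \<and> T k \<subseteq> V \<and> w k > 0)"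

definition lp_feasible ::
  "'s set \<Rightarrow> 'v set \<Rightarrow> 'u set \<Rightarrow> ('s \<Rightarrow> real) \<Rightarrow> ('v \<Rightarrow> real)
   \<Rightarrow> ('u \<Rightarrow> 's) \<Rightarrow> ('u \<Rightarrow> 'v set)
   \<Rightarrow> ('s \<Rightarrow> 'v \<Rightarrow> real) \<Rightarrow> ('u \<Rightarrow> real) \<Rightarrow> bool" where
  "lp_feasible S V U s c svc T x y \<longleftrightarrow>
     (\<forall>k\<in>U. 0 \<le> y k \<and> y k \<le> 1 \<and> y k \<le> (\<Sum>j\<in>T k. x (svc k) j)) \<and>
     (\<forall>j\<in>V. (\<Sum>i\<in>S. x i j * s i) \<le> c j) \<and>
     (\<forall>i\<in>S. \<forall>j\<in>V. 0 \<le> x i j \<and> x i j \<le> 1 \<and> (s i > c j \<longrightarrow> x i j = 0))"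

definition lp_optimal ::
  "'s set \<Rightarrow> 'v set \<Rightarrow> 'u set \<Rightarrow> ('s \<Rightarrow> real) \<Rightarrow> ('v \<Rightarrow> real)
   \<Rightarrow> ('u \<Rightarrow> 's) \<Rightarrow> ('u \<Rightarrow> 'v set) \<Rightarrow> ('u \<Rightarrow> real)
   \<Rightarrow> ('s \<Rightarrow> 'v \<Rightarrow> real) \<Rightarrow> ('u \<Rightarrow> real) \<Rightarrow> bool" where
  "lp_optimal S V U s c svc T w x y \<longleftrightarrow>
     lp_feasible S V U s c svc T x y \<and>
     (\<forall>x' y'. lp_feasible S V U s c svc T x' y' \<longrightarrow>
        (\<Sum>k\<in>U. y' k * w k) \<le> (\<Sum>k\<in>U. y k * w k))"

definition beta :: real where "beta = 1/4"
definition gamma :: real where "gamma = 1/2"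
definition delta :: real where "delta = 1/4"

text \<open>Classes: Cplus = \<oplus>, Cminus = \<ominus>, Cq q = q (meaningful for q \<ge> 1).\<close>
datatype cls = Cplus | Cminus | Cq nat

definition Pcls :: "'s set \<Rightarrow> ('s \<Rightarrow> real) \<Rightarrow> ('v \<Rightarrow> real) \<Rightarrow> cls \<Rightarrow> 'v \<Rightarrow> 's set" where
  "Pcls S s c k j = (case k of
      Cplus \<Rightarrow> {i\<in>S. c j / 2 < s i \<and> s i \<le> c j}
    | Cminus \<Rightarrow> {i\<in>S. c j / 4 < s i \<and> s i \<le> c j / 2}
    | Cq q \<Rightarrow> {i\<in>S. gamma ^ q * c j * beta < s i \<and> s i \<le> gamma ^ (q - 1) * c j * beta})"

definition dcls :: "'s set \<Rightarrow> ('s \<Rightarrow> real) \<Rightarrow> ('v \<Rightarrow> real) \<Rightarrow> ('s \<Rightarrow> 'v \<Rightarrow> real)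
                     \<Rightarrow> cls \<Rightarrow> 'v \<Rightarrow> real" where
  "dcls S s c x k j = (\<Sum>i\<in>Pcls S s c k j. x i j)"

text \<open>v_j; division by zero yields 0 (Isabelle convention).\<close>
definition vnode :: "'s set \<Rightarrow> ('s \<Rightarrow> real) \<Rightarrow> ('v \<Rightarrow> real) \<Rightarrow> ('s \<Rightarrow> 'v \<Rightarrow> real)
                      \<Rightarrow> 'v \<Rightarrow> real" where
  "vnode S s c x j = delta * c j / (\<Sum>i\<in>{i\<in>S. s i \<le> c j * beta}. s i * x i j)"

definition nslots :: "'s set \<Rightarrow> ('s \<Rightarrow> real) \<Rightarrow> ('v \<Rightarrow> real) \<Rightarrow> ('s \<Rightarrow> 'v \<Rightarrow> real)
                       \<Rightarrow> nat \<Rightarrow> 'v \<Rightarrow> nat" where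
  "nslots S s c x q j = nat \<lceil>vnode S s c x j * dcls S s c x (Cq q) j\<rceil>"

definition hnode :: "'s set \<Rightarrow> ('s \<Rightarrow> real) \<Rightarrow> ('v \<Rightarrow> real) \<Rightarrow> ('s \<Rightarrow> 'v \<Rightarrow> real)
                      \<Rightarrow> 'v \<Rightarrow> real" where
  "hnode S s c x j = (if dcls S s c x Cminus j < 2 then dcls S s c x Cminus j
                      else dcls S s c x Cminus j / 2)"

text \<open>A slot is a triple (node, class, index); nu = fst, kappa = fst o snd.\<close>
type_synonym 'v slot = "'v \<times> cls \<times> nat"

definition slots :: "'s set \<Rightarrow> 'v set \<Rightarrow> ('s \<Rightarrow> real) \<Rightarrow> ('v \<Rightarrow> real)
                      \<Rightarrow> ('s \<Rightarrow> 'v \<Rightarrow> real) \<Rightarrow> ('v \<Rightarrow> nat) \<Rightarrow> 'v slot set" where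
  "slots S V s c x \<zeta> =
     {(j, Cplus, 0) | j. j \<in> V \<and> \<zeta> j = 1} \<union>
     {(j, Cminus, n) | j n. j \<in> V \<and> \<zeta> j = 2 \<and> n < 2} \<union>
     {(j, Cq q, n) | j q n. j \<in> V \<and> \<zeta> j = 3 \<and> 1 \<le> q \<and> n < nslots S s c x q j}"

definition slot_node :: "'v slot \<Rightarrow> 'v" where "slot_node \<sigma> = fst \<sigma>"
definition slot_cls :: "'v slot \<Rightarrow> cls" where "slot_cls \<sigma> = fst (snd \<sigma>)"

definition slot_allocation ::
  "'s set \<Rightarrow> 'v set \<Rightarrow> ('s \<Rightarrow> real) \<Rightarrow> ('v \<Rightarrow> real) \<Rightarrow> ('s \<Rightarrow> 'v \<Rightarrow> real)
   \<Rightarrow> ('v \<Rightarrow> nat) \<Rightarrow> ('v slot \<Rightarrow> 's) \<Rightarrow> bool" where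
  "slot_allocation S V s c x \<zeta> \<tau> \<longleftrightarrow>
     (\<forall>\<sigma>\<in>slots S V s c x \<zeta>. \<tau> \<sigma> \<in> Pcls S s c (slot_cls \<sigma>) (slot_node \<sigma>))"

definition Xplace ::
  "'s set \<Rightarrow> 'v set \<Rightarrow> ('s \<Rightarrow> real) \<Rightarrow> ('v \<Rightarrow> real) \<Rightarrow> ('s \<Rightarrow> 'v \<Rightarrow> real)
   \<Rightarrow> ('v \<Rightarrow> nat) \<Rightarrow> ('v slot \<Rightarrow> 's) \<Rightarrow> 's \<Rightarrow> 'v set" where
  "Xplace S V s c x \<zeta> \<tau> i =
     {j. \<exists>\<sigma>\<in>slots S V s c x \<zeta>. slot_node \<sigma> = j \<and> \<tau> \<sigma> = i}"

definition zeta_prob :: "'s set \<Rightarrow> ('s \<Rightarrow> real) \<Rightarrow> ('v \<Rightarrow> real) \<Rightarrow> ('s \<Rightarrow> 'v \<Rightarrow> real)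
                          \<Rightarrow> 'v \<Rightarrow> nat \<Rightarrow> real" where
  "zeta_prob S s c x j k =
     (if k = 1 then delta * dcls S s c x Cplus j
      else if k = 2 then delta * hnode S s c x j
      else if k = 3 then 1 - delta * dcls S s c x Cplus j - delta * hnode S s c x j
      else 0)"

definition prob_zeta :: "'s set \<Rightarrow> 'v set \<Rightarrow> ('s \<Rightarrow> real) \<Rightarrow> ('v \<Rightarrow> real)
                          \<Rightarrow> ('s \<Rightarrow> 'v \<Rightarrow> real) \<Rightarrow> ('v \<Rightarrow> nat) \<Rightarrow> real" where
  "prob_zeta S V s c x \<zeta> = (\<Prod>j\<in>V. zeta_prob S s c x j (\<zeta> j))"

definition prob_tau :: "'s set \<Rightarrow> 'v set \<Rightarrow> ('s \<Rightarrow> real) \<Rightarrow> ('v \<Rightarrow> real)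
                         \<Rightarrow> ('s \<Rightarrow> 'v \<Rightarrow> real) \<Rightarrow> ('v \<Rightarrow> nat) \<Rightarrow> ('v slot \<Rightarrow> 's) \<Rightarrow> real" where
  "prob_tau S V s c x \<zeta> \<tau> =
     (\<Prod>\<sigma>\<in>slots S V s c x \<zeta>.
        if \<tau> \<sigma> \<in> Pcls S s c (slot_cls \<sigma>) (slot_node \<sigma>)
        then x (\<tau> \<sigma>) (slot_node \<sigma>) / dcls S s c x (slot_cls \<sigma>) (slot_node \<sigma>)
        else 0)"

end

theory Submission
  imports Defs
begin

(* A node j with zeta j = 1 receives one service of size at most c_j, and one with zeta j = 2
   two services of size at most c_j/2.  For zeta j = 3, a slot of class q holds a service of
   size at most gamma^(q-1) beta c_j, which is at most twice the size of every service in
   P_j^q.  There are ceil(v_j d_j^q) <= v_j d_j^q + 1 such slots: the extra slots contribute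
   at most sum_(q>=1) gamma^(q-1) beta c_j = c_j/2, and, the classes P_j^q being disjoint, the
   others at most 2 v_j sum_(s_i <= beta c_j) s_i x_ij = 2 delta c_j = c_j/2. *)

lemma sum_half_powers_le_one:
  assumes "finite Q" "0 \<notin> Q"
  shows "(\<Sum>q\<in>Q. (1/2::real) ^ q) \<le> 1"
proof -
  have "(\<Sum>q\<in>insert 0 Q. (1/2::real) ^ q) \<le> (\<Sum>q. (1/2) ^ q)"
    using assms(1) by (intro sum_le_suminf summable_geometric) auto
  also have "\<dots> = 2"
    using suminf_geometric[of "1/2::real"] by simp
  finally show ?thesis
    using assms by simp
qed

lemma Pcls_subset: "Pcls S s c k j \<subseteq> S"
  by (auto simp: Pcls_def split: cls.split)

definition cls_cap :: "('v \<Rightarrow> real) \<Rightarrow> cls \<Rightarrow> 'v \<Rightarrow> real" where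
  "cls_cap c k j = (case k of
      Cplus \<Rightarrow> c j
    | Cminus \<Rightarrow> c j / 2
    | Cq q \<Rightarrow> gamma ^ (q - 1) * c j * beta)"

lemma Pcls_size_le_cls_cap: "i \<in> Pcls S s c k j \<Longrightarrow> s i \<le> cls_cap c k j"
  by (auto simp: Pcls_def cls_cap_def split: cls.splits)

lemma Pcls_size_pos:
  assumes "c j > 0" "i \<in> Pcls S s c k j"
  shows "0 < s i"
proof (cases k)
  case (Cq q)
  have "0 < gamma ^ q * c j * beta"
    using assms(1) by (simp add: gamma_def beta_def)
  with assms(2) Cq show ?thesis
    by (auto simp: Pcls_def)
qed (use assms in \<open>auto simp: Pcls_def\<close>)

lemma Pcls_Cq_small:
  assumes "c j > 0" "i \<in> Pcls S s c (Cq q) j"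
  shows "s i \<le> c j * beta"
proof -
  have "s i \<le> gamma ^ (q - 1) * (c j * beta)"
    using assms(2) by (simp add: Pcls_def mult.assoc)
  also have "\<dots> \<le> 1 * (c j * beta)"
    using assms(1) by (intro mult_right_mono) (simp_all add: gamma_def beta_def power_le_one)
  finally show ?thesis
    by simp
qed

lemma cls_cap_Cq_le_twice_size:
  assumes "0 < q" "i \<in> Pcls S s c (Cq q) j"
  shows "cls_cap c (Cq q) j \<le> 2 * s i"
proof -
  have "cls_cap c (Cq q) j = 2 * (gamma ^ q * c j * beta)"
    using assms(1) by (cases q) (auto simp: cls_cap_def gamma_def)
  then show ?thesis
    using assms(2) by (simp add: Pcls_def)
qed

lemma Pcls_Cq_disjoint:
  assumes "c j > 0" "q \<noteq> q'"
  shows "Pcls S s c (Cq q) j \<inter> Pcls S s c (Cq q') j = {}"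
proof -
  have "Pcls S s c (Cq a) j \<inter> Pcls S s c (Cq b) j = {}" if "a < b" for a b
  proof -
    have "gamma ^ (b - 1) \<le> gamma ^ a"
      using that by (intro power_decreasing) (auto simp: gamma_def)
    then have "gamma ^ (b - 1) * c j * beta \<le> gamma ^ a * c j * beta"
      using assms(1) by (simp add: beta_def)
    then show ?thesis
      by (auto simp: Pcls_def)
  qed
  then show ?thesis
    using assms(2) by (cases "q < q'") (auto simp: Int_commute nat_neq_iff)
qed

lemma finite_nonempty_Pcls_Cq:
  assumes "finite S" "c j > 0"
  shows "finite {q. Pcls S s c (Cq q) j \<noteq> {}}"
proof (rule inj_on_finite)
  let ?P = "\<lambda>q. Pcls S s c (Cq q) j"
  \<comment> \<open>Distinct classes are disjoint, so picking one member of each nonempty class is injective.\<close>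
  let ?pick = "\<lambda>q. SOME i. i \<in> ?P q"
  have pick: "?pick q \<in> ?P q" if "q \<in> {q. ?P q \<noteq> {}}" for q
    using that unfolding mem_Collect_eq some_in_eq .
  show "inj_on ?pick {q. ?P q \<noteq> {}}"
  proof (rule inj_onI)
    fix q q' assume q: "q \<in> {q. ?P q \<noteq> {}}" and q': "q' \<in> {q. ?P q \<noteq> {}}"
      and "?pick q = ?pick q'"
    then have common: "?pick q \<in> ?P q \<inter> ?P q'"
      using pick[OF q] pick[OF q'] by (simp only: IntI)
    show "q = q'"
    proof (rule ccontr)
      assume "q \<noteq> q'"
      with assms(2) have "?P q \<inter> ?P q' = {}"
        by (rule Pcls_Cq_disjoint)
      with common show False
        by (simp only: empty_iff)
    qed
  qed
  show "?pick ` {q. ?P q \<noteq> {}} \<subseteq> S"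
    using pick Pcls_subset[of S s c _ j] by blast
qed (rule assms(1))

lemma finite_nslots_pos:
  assumes "finite S" "c j > 0"
  shows "finite {q. 0 < nslots S s c x q j}"
proof (rule finite_subset[OF _ finite_nonempty_Pcls_Cq[of S c j, OF assms]])
  show "{q. 0 < nslots S s c x q j} \<subseteq> {q. Pcls S s c (Cq q) j \<noteq> {}}"
    by (auto simp: nslots_def dcls_def)
qed

lemma sum_cls_cap_Cq_le:
  assumes "finite Q" "0 \<notin> Q" "c j \<ge> 0"
  shows "(\<Sum>q\<in>Q. cls_cap c (Cq q) j) \<le> c j / 2"
proof -
  have "(\<Sum>q\<in>Q. cls_cap c (Cq q) j) = (\<Sum>q\<in>Q. c j / 2 * (1/2) ^ q)"
  proof (rule sum.cong)
    fix q assume "q \<in> Q"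
    then obtain p where "q = Suc p"
      using assms(2) by (cases q) auto
    then show "cls_cap c (Cq q) j = c j / 2 * (1/2) ^ q"
      by (simp add: cls_cap_def gamma_def beta_def)
  qed simp
  also have "\<dots> = c j / 2 * (\<Sum>q\<in>Q. (1/2) ^ q)"
    by (simp add: sum_distrib_left)
  also have "\<dots> \<le> c j / 2"
    using sum_half_powers_le_one[OF assms(1,2)] assms(3) by (simp add: mult_left_le)
  finally show ?thesis .
qed

lemma sum_dcls_cls_cap_le:
  assumes "finite S" "c j > 0" "\<forall>i\<in>S. 0 \<le> s i" "\<forall>i\<in>S. 0 \<le> x i j"
    and "finite Q" "0 \<notin> Q"
  shows "(\<Sum>q\<in>Q. dcls S s c x (Cq q) j * cls_cap c (Cq q) j)
           \<le> 2 * (\<Sum>i\<in>{i\<in>S. s i \<le> c j * beta}. s i * x i j)"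
proof -
  let ?P = "\<lambda>q. Pcls S s c (Cq q) j"
  have "dcls S s c x (Cq q) j * cls_cap c (Cq q) j \<le> (\<Sum>i\<in>?P q. 2 * (s i * x i j))"
    if "q \<in> Q" for q
  proof -
    have "dcls S s c x (Cq q) j * cls_cap c (Cq q) j = (\<Sum>i\<in>?P q. x i j * cls_cap c (Cq q) j)"
      by (simp add: dcls_def sum_distrib_right)
    also have "\<dots> \<le> (\<Sum>i\<in>?P q. x i j * (2 * s i))"
    proof (rule sum_mono)
      fix i assume i: "i \<in> ?P q"
      have "0 < q"
        using that assms(6) by (cases q) auto
      from this i have "cls_cap c (Cq q) j \<le> 2 * s i"
        by (rule cls_cap_Cq_le_twice_size)
      moreover have "0 \<le> x i j"
        using subsetD[OF Pcls_subset i] assms(4) by blast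
      ultimately show "x i j * cls_cap c (Cq q) j \<le> x i j * (2 * s i)"
        by (rule mult_left_mono)
    qed
    finally show ?thesis
      by (simp add: algebra_simps)
  qed
  then have "(\<Sum>q\<in>Q. dcls S s c x (Cq q) j * cls_cap c (Cq q) j)
               \<le> (\<Sum>q\<in>Q. \<Sum>i\<in>?P q. 2 * (s i * x i j))"
    by (rule sum_mono)
  also have "\<dots> = (\<Sum>i\<in>(\<Union>q\<in>Q. ?P q). 2 * (s i * x i j))"
  proof (rule sum.UNION_disjoint[symmetric])
    show "\<forall>q\<in>Q. finite (?P q)"
      using assms(1) by (simp add: finite_subset[OF Pcls_subset])
    show "\<forall>q\<in>Q. \<forall>q'\<in>Q. q \<noteq> q' \<longrightarrow> ?P q \<inter> ?P q' = {}"
      using assms(2) by (intro ballI impI Pcls_Cq_disjoint)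
  qed (rule assms(5))
  also have "\<dots> \<le> (\<Sum>i\<in>{i\<in>S. s i \<le> c j * beta}. 2 * (s i * x i j))"
  proof (rule sum_mono2)
    show "(\<Union>q\<in>Q. ?P q) \<subseteq> {i\<in>S. s i \<le> c j * beta}"
    proof (intro UN_least subsetI CollectI conjI)
      fix q i assume "i \<in> ?P q"
      then show "i \<in> S"
        by (rule subsetD[OF Pcls_subset])
      from assms(2) \<open>i \<in> ?P q\<close> show "s i \<le> c j * beta"
        by (rule Pcls_Cq_small)
    qed
  qed (use assms(1,3,4) in auto)
  finally show ?thesis
    by (simp add: sum_distrib_left)
qed

lemma sum_nslots_cls_cap_le:
  assumes "finite S" "c j > 0" "\<forall>i\<in>S. 0 \<le> s i" "\<forall>i\<in>S. 0 \<le> x i j"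
    and "finite Q" "0 \<notin> Q"
  shows "(\<Sum>q\<in>Q. real (nslots S s c x q j) * cls_cap c (Cq q) j) \<le> c j"
proof -
  let ?d = "\<lambda>q. dcls S s c x (Cq q) j"
  define A where "A = (\<Sum>i\<in>{i\<in>S. s i \<le> c j * beta}. s i * x i j)"
  define v where "v = vnode S s c x j"
  have v: "v = c j / (4 * A)"
    by (simp add: v_def A_def vnode_def delta_def)
  have "0 \<le> A"
    unfolding A_def using assms(3,4) by (intro sum_nonneg) auto
  then have "0 \<le> v"
    using v assms(2) by simp
  have "v * (2 * A) \<le> c j / 2"
    using v assms(2) by (cases "A = 0") auto
  have "0 \<le> ?d q" for q
    unfolding dcls_def using assms(4) Pcls_subset[of S s c "Cq q" j] by (intro sum_nonneg) blast
  then have nslots: "real (nslots S s c x q j) \<le> v * ?d q + 1" for q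
    using \<open>0 \<le> v\<close> by (simp add: nslots_def v_def)
  have "(\<Sum>q\<in>Q. real (nslots S s c x q j) * cls_cap c (Cq q) j)
          \<le> (\<Sum>q\<in>Q. (v * ?d q + 1) * cls_cap c (Cq q) j)"
    using nslots assms(2)
    by (intro sum_mono mult_right_mono) (auto simp: cls_cap_def gamma_def beta_def)
  also have "\<dots> = v * (\<Sum>q\<in>Q. ?d q * cls_cap c (Cq q) j) + (\<Sum>q\<in>Q. cls_cap c (Cq q) j)"
    by (simp add: algebra_simps sum.distrib sum_distrib_left)
  also have "\<dots> \<le> v * (2 * A) + c j / 2"
    using sum_dcls_cls_cap_le[of S c j s x Q, OF assms] sum_cls_cap_Cq_le[of Q c j, OF assms(5,6)]
      assms(2) \<open>0 \<le> v\<close>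
    unfolding A_def by (intro add_mono mult_left_mono) auto
  also have "\<dots> \<le> c j"
    using \<open>v * (2 * A) \<le> c j / 2\<close> by simp
  finally show ?thesis .
qed

definition node_slots ::
  "'s set \<Rightarrow> 'v set \<Rightarrow> ('s \<Rightarrow> real) \<Rightarrow> ('v \<Rightarrow> real) \<Rightarrow> ('s \<Rightarrow> 'v \<Rightarrow> real)
   \<Rightarrow> ('v \<Rightarrow> nat) \<Rightarrow> 'v \<Rightarrow> 'v slot set" where
  "node_slots S V s c x \<zeta> j = {\<sigma> \<in> slots S V s c x \<zeta>. slot_node \<sigma> = j}"

lemma node_slots_Cplus:
  "j \<in> V \<Longrightarrow> \<zeta> j = 1 \<Longrightarrow> node_slots S V s c x \<zeta> j = {(j, Cplus, 0)}"
  by (auto simp: node_slots_def slots_def slot_node_def)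

lemma node_slots_Cminus:
  "j \<in> V \<Longrightarrow> \<zeta> j = 2 \<Longrightarrow> node_slots S V s c x \<zeta> j = {(j, Cminus, 0), (j, Cminus, 1)}"
  by (auto simp: node_slots_def slots_def slot_node_def less_2_cases_iff)

lemma node_slots_Cq:
  assumes "j \<in> V" "\<zeta> j = 3"
  shows "node_slots S V s c x \<zeta> j = (\<lambda>(q, n). (j, Cq q, n)) `
           (SIGMA q:{q. 0 < q \<and> 0 < nslots S s c x q j}. {..<nslots S s c x q j})"
  using assms by (auto simp: node_slots_def slots_def slot_node_def image_iff)

lemma finite_node_slots:
  assumes "finite S" "c j > 0" "j \<in> V" "\<zeta> j \<in> {1, 2, 3}"
  shows "finite (node_slots S V s c x \<zeta> j)"
proof -
  have "finite {q. 0 < q \<and> 0 < nslots S s c x q j}"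
    using finite_nslots_pos[of S c j s x, OF assms(1,2)] by (rule finite_subset[rotated]) blast
  then show ?thesis
    using assms(3,4) by (auto simp: node_slots_Cplus node_slots_Cminus node_slots_Cq)
qed

lemma sum_node_slots_cls_cap_le:
  assumes "finite S" "c j > 0" "\<forall>i\<in>S. 0 \<le> s i" "\<forall>i\<in>S. 0 \<le> x i j"
    and "j \<in> V" "\<zeta> j \<in> {1, 2, 3}"
  shows "(\<Sum>\<sigma>\<in>node_slots S V s c x \<zeta> j. cls_cap c (slot_cls \<sigma>) j) \<le> c j"
proof -
  consider "\<zeta> j = 1" | "\<zeta> j = 2" | "\<zeta> j = 3"
    using assms(6) by blast
  then show ?thesis
  proof cases
    case 1
    then show ?thesis
      using assms(5) by (simp add: node_slots_Cplus cls_cap_def slot_cls_def)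
  next
    case 2
    then show ?thesis
      using assms(5) by (simp add: node_slots_Cminus cls_cap_def slot_cls_def)
  next
    case 3
    define Q where "Q = {q. 0 < q \<and> 0 < nslots S s c x q j}"
    have "finite Q"
      unfolding Q_def using finite_nslots_pos[of S c j s x, OF assms(1,2)]
      by (rule finite_subset[rotated]) blast
    have "(\<Sum>\<sigma>\<in>node_slots S V s c x \<zeta> j. cls_cap c (slot_cls \<sigma>) j)
            = (\<Sum>(q, n)\<in>(SIGMA q:Q. {..<nslots S s c x q j}). cls_cap c (Cq q) j)"
      unfolding node_slots_Cq[of j V \<zeta>, OF assms(5) 3] Q_def
      by (subst sum.reindex) (auto simp: inj_on_def slot_cls_def case_prod_beta)
    also have "\<dots> = (\<Sum>q\<in>Q. real (nslots S s c x q j) * cls_cap c (Cq q) j)"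
      using \<open>finite Q\<close> by (simp add: sum.Sigma[symmetric])
    also have "\<dots> \<le> c j"
      using \<open>finite Q\<close> by (intro sum_nslots_cls_cap_le assms(1-4)) (auto simp: Q_def)
    finally show ?thesis .
  qed
qed

lemma node_load_le_sum_node_slots:
  assumes "slot_allocation S V s c x \<zeta> \<tau>" "finite (node_slots S V s c x \<zeta> j)" "c j > 0"
  shows "(\<Sum>i\<in>{i\<in>S. j \<in> Xplace S V s c x \<zeta> \<tau> i}. s i)
           \<le> (\<Sum>\<sigma>\<in>node_slots S V s c x \<zeta> j. s (\<tau> \<sigma>))"
proof -
  let ?A = "node_slots S V s c x \<zeta> j"
  let ?L = "{i\<in>S. j \<in> Xplace S V s c x \<zeta> \<tau> i}"
  have size_nonneg: "0 \<le> s (\<tau> \<sigma>)" if "\<sigma> \<in> ?A" for \<sigma>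
  proof -
    have "\<tau> \<sigma> \<in> Pcls S s c (slot_cls \<sigma>) j"
      using assms(1) that by (auto simp: slot_allocation_def node_slots_def)
    from Pcls_size_pos[of c j, OF assms(3) this] show ?thesis
      by simp
  qed
  have "sum s ?L \<le> sum s (\<tau> ` ?A)"
  proof (rule sum_mono2)
    show "?L \<subseteq> \<tau> ` ?A"
      by (auto simp: Xplace_def node_slots_def)
    show "0 \<le> s i" if "i \<in> \<tau> ` ?A - ?L" for i
      using that size_nonneg by auto
  qed (use assms(2) in simp)
  also have "\<dots> \<le> (\<Sum>\<sigma>\<in>?A. s (\<tau> \<sigma>))"
    using sum_image_le[OF assms(2), of s \<tau>] size_nonneg by (simp add: comp_def)
  finally show ?thesis .
qed

theorem theorem9:
  fixes S :: "'s set" and V :: "'v set" and U :: "'u set"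
    and s :: "'s \<Rightarrow> real" and c :: "'v \<Rightarrow> real"
    and svc :: "'u \<Rightarrow> 's" and T :: "'u \<Rightarrow> 'v set" and w :: "'u \<Rightarrow> real"
    and x :: "'s \<Rightarrow> 'v \<Rightarrow> real" and y :: "'u \<Rightarrow> real"
    and \<zeta> :: "'v \<Rightarrow> nat" and \<tau> :: "'v slot \<Rightarrow> 's"
  assumes inst: "spsc_instance S V U s c svc T w"
    and opt: "lp_optimal S V U s c svc T w x y"
    and zeta_map: "\<forall>j\<in>V. \<zeta> j \<in> {1, 2, 3}"
    and alloc: "slot_allocation S V s c x \<zeta> \<tau>"
    and pos: "prob_zeta S V s c x \<zeta> * prob_tau S V s c x \<zeta> \<tau> \<noteq> 0"
  shows "\<forall>j\<in>V. (\<Sum>i\<in>S. s i * (if j \<in> Xplace S V s c x \<zeta> \<tau> i then 1 else 0)) \<le> c j"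
proof
  \<comment> \<open>Feasibility holds for every slot allocation, so \<open>pos\<close> is not needed.\<close>
  fix j assume j: "j \<in> V"
  have S: "finite S" "\<forall>i\<in>S. 0 \<le> s i" and "c j > 0"
    using inst j by (auto simp: spsc_instance_def less_imp_le)
  have x: "\<forall>i\<in>S. 0 \<le> x i j"
    using opt j by (auto simp: lp_optimal_def lp_feasible_def)
  have fin: "finite (node_slots S V s c x \<zeta> j)"
    using S(1) \<open>c j > 0\<close> j zeta_map by (intro finite_node_slots) auto
  have "(\<Sum>i\<in>S. s i * (if j \<in> Xplace S V s c x \<zeta> \<tau> i then 1 else 0))
          = (\<Sum>i\<in>{i\<in>S. j \<in> Xplace S V s c x \<zeta> \<tau> i}. s i)"
    using S(1) by (auto simp: sum.inter_filter intro!: sum.cong)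
  also have "\<dots> \<le> (\<Sum>\<sigma>\<in>node_slots S V s c x \<zeta> j. s (\<tau> \<sigma>))"
    using alloc fin \<open>c j > 0\<close> by (rule node_load_le_sum_node_slots)
  also have "\<dots> \<le> (\<Sum>\<sigma>\<in>node_slots S V s c x \<zeta> j. cls_cap c (slot_cls \<sigma>) j)"
    using alloc by (intro sum_mono Pcls_size_le_cls_cap)
      (auto simp: slot_allocation_def node_slots_def)
  also have "\<dots> \<le> c j"
    using S \<open>c j > 0\<close> x j zeta_map by (intro sum_node_slots_cls_cap_le) auto
  finally show "(\<Sum>i\<in>S. s i * (if j \<in> Xplace S V s c x \<zeta> \<tau> i then 1 else 0)) \<le> c j" .
qed

end
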